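(* Let $f\in D[t;\sigma,\delta]$ be monic of degree $m\ge2$ and let $B$ be a subring of $D$. (i) $f$ is $B$-weak semi-invariant if and only if $B\subseteq\mathrm{Nuc}_r(S_f)$. (ii) If $f$ is $B$-weak semi-invariant but not right invariant, then $B\subseteq \mathrm{Nuc}(S_f)\subseteq D$.
   Context: $D$ is an associative division ring, $\sigma$ a ring endomorphism of $D$, $\delta$ a left $\sigma$-derivation ($\delta(ab)=\sigma(a)\delta(b)+\delta(a)b$, additive). $R=D[t;\sigma,\delta]$ is the skew polynomial ring with $ta=\sigma(a)t+\delta(a)$. For monic $f$ of degree $m$, $S_f$ is the set of polynomials of degree $<m$ with multiplication $g\circ h=$ remainder of $gh$ upon right division by $f$ ($gh=qf+r$, $\deg r<m$). Associator $[x,y,z]=(xy)z-x(yz)$; $\mathrm{Nuc}_r(A)=\{x:[A,A,x]=0\}$; $\mathrm{Nuc}(A)=\{x:[x,A,A]=[A,x,A]=[A,A,x]=0\}$. $f$ is $B$-weak semi-invariant if $fB\subseteq Df$. $f$ is right invariant if $fR\subseteq Rf$ (i.e. $Rf$ is a two-sided ideal of $R$). *)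

theory Defs
  imports "HOL-Computational_Algebra.Polynomial"
begin

text \<open>Skew polynomial ring D[t; sigma, delta] over a division ring D, with
elements represented as coefficient lists ('a poly, used only as a container of
coefficients: p = sum_i coeff p i * t^i, coefficients written on the left).
The commutative multiplication of 'a poly is NOT used; skew_mult is the product.\<close>

definition ring_endo :: "('a::division_ring \<Rightarrow> 'a) \<Rightarrow> bool" where
  "ring_endo \<sigma> \<longleftrightarrow> (\<forall>a b. \<sigma> (a + b) = \<sigma> a + \<sigma> b) \<and>
     (\<forall>a b. \<sigma> (a * b) = \<sigma> a * \<sigma> b) \<and> \<sigma> 1 = 1"

definition left_sigma_derivation :: "('a::division_ring \<Rightarrow> 'a) \<Rightarrow> ('a \<Rightarrow> 'a) \<Rightarrow> bool" where
  "left_sigma_derivation \<sigma> \<delta> \<longleftrightarrow> (\<forall>a b. \<delta> (a + b) = \<delta> a + \<delta> b) \<and>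
     (\<forall>a b. \<delta> (a * b) = \<sigma> a * \<delta> b + \<delta> a * b)"

definition is_subring :: "'a::division_ring set \<Rightarrow> bool" where
  "is_subring B \<longleftrightarrow> 0 \<in> B \<and> 1 \<in> B \<and> (\<forall>a\<in>B. \<forall>b\<in>B. a + b \<in> B \<and> a * b \<in> B) \<and>
     (\<forall>a\<in>B. - a \<in> B)"

text \<open>left multiplication by t: t (a t^i) = sigma(a) t^(i+1) + delta(a) t^i\<close>
definition tmul :: "('a::division_ring \<Rightarrow> 'a) \<Rightarrow> ('a \<Rightarrow> 'a) \<Rightarrow> 'a poly \<Rightarrow> 'a poly" where
  "tmul \<sigma> \<delta> p = pCons 0 (map_poly \<sigma> p) + map_poly \<delta> p"

definition lscal :: "'a::division_ring \<Rightarrow> 'a poly \<Rightarrow> 'a poly" where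
  "lscal c p = map_poly (\<lambda>x. c * x) p"

definition skew_mult :: "('a::division_ring \<Rightarrow> 'a) \<Rightarrow> ('a \<Rightarrow> 'a) \<Rightarrow> 'a poly \<Rightarrow> 'a poly \<Rightarrow> 'a poly" where
  "skew_mult \<sigma> \<delta> p q = (\<Sum>i\<le>degree p. lscal (coeff p i) ((tmul \<sigma> \<delta> ^^ i) q))"

definition skew_rmod :: "('a::division_ring \<Rightarrow> 'a) \<Rightarrow> ('a \<Rightarrow> 'a) \<Rightarrow> 'a poly \<Rightarrow> 'a poly \<Rightarrow> 'a poly" where
  "skew_rmod \<sigma> \<delta> g f = (THE r. degree r < degree f \<and> (\<exists>q. g = skew_mult \<sigma> \<delta> q f + r))"

definition Sf_carrier :: "'a::division_ring poly \<Rightarrow> 'a poly set" where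
  "Sf_carrier f = {g. degree g < degree f}"

definition Sf_mult :: "('a::division_ring \<Rightarrow> 'a) \<Rightarrow> ('a \<Rightarrow> 'a) \<Rightarrow> 'a poly \<Rightarrow> 'a poly \<Rightarrow> 'a poly \<Rightarrow> 'a poly" where
  "Sf_mult \<sigma> \<delta> f g h = skew_rmod \<sigma> \<delta> (skew_mult \<sigma> \<delta> g h) f"

definition Sf_assoc :: "('a::division_ring \<Rightarrow> 'a) \<Rightarrow> ('a \<Rightarrow> 'a) \<Rightarrow> 'a poly \<Rightarrow> 'a poly \<Rightarrow> 'a poly \<Rightarrow> 'a poly \<Rightarrow> 'a poly" where
  "Sf_assoc \<sigma> \<delta> f x y z =
     Sf_mult \<sigma> \<delta> f (Sf_mult \<sigma> \<delta> f x y) z - Sf_mult \<sigma> \<delta> f x (Sf_mult \<sigma> \<delta> f y z)"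

definition Sf_right_nucleus :: "('a::division_ring \<Rightarrow> 'a) \<Rightarrow> ('a \<Rightarrow> 'a) \<Rightarrow> 'a poly \<Rightarrow> 'a poly set" where
  "Sf_right_nucleus \<sigma> \<delta> f = {x \<in> Sf_carrier f. \<forall>y\<in>Sf_carrier f. \<forall>z\<in>Sf_carrier f. Sf_assoc \<sigma> \<delta> f y z x = 0}"

definition Sf_nucleus :: "('a::division_ring \<Rightarrow> 'a) \<Rightarrow> ('a \<Rightarrow> 'a) \<Rightarrow> 'a poly \<Rightarrow> 'a poly set" where
  "Sf_nucleus \<sigma> \<delta> f = {x \<in> Sf_carrier f. \<forall>y\<in>Sf_carrier f. \<forall>z\<in>Sf_carrier f.
      Sf_assoc \<sigma> \<delta> f x y z = 0 \<and> Sf_assoc \<sigma> \<delta> f y x z = 0 \<and> Sf_assoc \<sigma> \<delta> f y z x = 0}"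

definition weak_semi_invariant :: "('a::division_ring \<Rightarrow> 'a) \<Rightarrow> ('a \<Rightarrow> 'a) \<Rightarrow> 'a set \<Rightarrow> 'a poly \<Rightarrow> bool" where
  "weak_semi_invariant \<sigma> \<delta> B f \<longleftrightarrow> (\<forall>b\<in>B. \<exists>d. skew_mult \<sigma> \<delta> f [:b:] = skew_mult \<sigma> \<delta> [:d:] f)"

definition right_invariant :: "('a::division_ring \<Rightarrow> 'a) \<Rightarrow> ('a \<Rightarrow> 'a) \<Rightarrow> 'a poly \<Rightarrow> bool" where
  "right_invariant \<sigma> \<delta> f \<longleftrightarrow> (\<forall>g. \<exists>h. skew_mult \<sigma> \<delta> f g = skew_mult \<sigma> \<delta> h f)"

end

theory Submission
  imports Defs
begin

text \<open>Right division by a monic f of degree m works in R = D[t;\<sigma>,\<delta>]. Writing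
x y = q f + x \<circ> y, the associator of S_f is [x, y, z] = -(q f z mod f). Taking
x = t, y = t^(m-1) (so q = 1) shows that z lies in the right nucleus iff f z \<in> R f, and for
a constant z = b a degree count turns f b = h f into f b = d f with d \<in> D. Products with a
constant are never reduced, so such constants also lie in the left and middle nuclei.
Conversely, if a nonconstant x of degree k is in the left nucleus, then x t^(m-k) = c f + r
with c \<noteq> 0, so f z \<in> R f for every z of degree < m, i.e. f is right invariant.\<close>

locale skew_polynomial_ring =
  fixes \<sigma> \<delta> :: "'a::division_ring \<Rightarrow> 'a"
  assumes endo: "ring_endo \<sigma>" and derivation: "left_sigma_derivation \<sigma> \<delta>"
begin

abbreviation tm :: "'a poly \<Rightarrow> 'a poly" where "tm \<equiv> tmul \<sigma> \<delta>"
abbreviation skew_times :: "'a poly \<Rightarrow> 'a poly \<Rightarrow> 'a poly" (infixl "\<odot>" 70)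
  where "p \<odot> q \<equiv> skew_mult \<sigma> \<delta> p q"
abbreviation rmod :: "'a poly \<Rightarrow> 'a poly \<Rightarrow> 'a poly" where "rmod \<equiv> skew_rmod \<sigma> \<delta>"

lemma sigma_add: "\<sigma> (a + b) = \<sigma> a + \<sigma> b"
  and sigma_mult: "\<sigma> (a * b) = \<sigma> a * \<sigma> b"
  and sigma_one: "\<sigma> 1 = 1"
  using endo unfolding ring_endo_def by blast+

lemma delta_add: "\<delta> (a + b) = \<delta> a + \<delta> b"
  and delta_mult: "\<delta> (a * b) = \<sigma> a * \<delta> b + \<delta> a * b"
  using derivation unfolding left_sigma_derivation_def by blast+

lemma sigma_zero: "\<sigma> 0 = 0"
  using sigma_add[of 0 0] by simp

lemma delta_zero: "\<delta> 0 = 0"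
  using delta_add[of 0 0] by simp

lemma delta_one: "\<delta> 1 = 0"
  using delta_mult[of 1 1] by (simp add: sigma_one)

subsection \<open>Left multiplication by t and by constants\<close>

lemma coeff_tmul: "coeff (tm p) n = (if n = 0 then 0 else \<sigma> (coeff p (n - 1))) + \<delta> (coeff p n)"
  unfolding tmul_def by (cases n) (auto simp: coeff_map_poly sigma_zero delta_zero)

lemma coeff_lscal: "coeff (lscal c p) n = c * coeff p n"
  unfolding lscal_def by (simp add: coeff_map_poly)

lemma tmul_add: "tm (p + q) = tm p + tm q"
  by (rule poly_eqI) (simp add: coeff_tmul sigma_add delta_add algebra_simps)

lemma tmul_0: "tm 0 = 0"
  by (rule poly_eqI) (simp add: coeff_tmul sigma_zero delta_zero)

lemma tmul_pCons: "tm (pCons a p) = pCons (\<delta> a) ([:\<sigma> a:] + tm p)"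
proof (rule poly_eqI)
  fix n show "coeff (tm (pCons a p)) n = coeff (pCons (\<delta> a) ([:\<sigma> a:] + tm p)) n"
    by (cases n; cases "n - 1") (auto simp: coeff_tmul coeff_pCons sigma_zero delta_zero)
qed

lemma tmul_lscal: "tm (lscal a p) = lscal (\<sigma> a) (tm p) + lscal (\<delta> a) p"
  by (rule poly_eqI) (simp add: coeff_tmul coeff_lscal sigma_mult delta_mult algebra_simps)

lemma tmul_monom_one: "tm (monom 1 k) = monom 1 (Suc k)"
  by (rule poly_eqI) (auto simp: coeff_tmul sigma_one delta_one sigma_zero delta_zero)

lemma lscal_add: "lscal c (p + q) = lscal c p + lscal c q"
  by (rule poly_eqI) (simp add: coeff_lscal algebra_simps)

lemma lscal_add_left: "lscal (a + b) p = lscal a p + lscal b p"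
  by (rule poly_eqI) (simp add: coeff_lscal algebra_simps)

lemma lscal_lscal: "lscal a (lscal b p) = lscal (a * b) p"
  by (rule poly_eqI) (simp add: coeff_lscal algebra_simps)

lemma lscal_one [simp]: "lscal 1 p = p"
  by (rule poly_eqI) (simp add: coeff_lscal)

lemma lscal_0_left [simp]: "lscal 0 p = 0"
  by (rule poly_eqI) (simp add: coeff_lscal)

lemma lscal_0_right [simp]: "lscal c 0 = 0"
  by (rule poly_eqI) (simp add: coeff_lscal)

lemma lscal_pCons: "lscal c (pCons a p) = pCons (c * a) (lscal c p)"
  by (rule poly_eqI) (simp add: coeff_lscal coeff_pCons split: nat.split)

lemma degree_lscal_le: "degree (lscal c p) \<le> degree p"
  by (rule degree_le) (simp add: coeff_lscal coeff_eq_0)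

lemma degree_lscal:
  assumes "c \<noteq> 0" shows "degree (lscal c p) = degree p"
proof (cases "p = 0")
  case False
  then have "coeff (lscal c p) (degree p) \<noteq> 0" using assms by (simp add: coeff_lscal)
  then have "degree p \<le> degree (lscal c p)" by (rule le_degree)
  then show ?thesis using degree_lscal_le[of c p] by simp
qed simp

lemma lead_coeff_lscal: "c \<noteq> 0 \<Longrightarrow> lead_coeff (lscal c p) = c * lead_coeff p"
  by (simp add: degree_lscal coeff_lscal)

lemma degree_tmul_le: "degree (tm p) \<le> Suc (degree p)"
  by (rule degree_le) (simp add: coeff_tmul coeff_eq_0 sigma_zero delta_zero)

lemma tmul_monic:
  assumes "lead_coeff f = 1"
  shows "degree (tm f) = Suc (degree f)" and "lead_coeff (tm f) = 1"
proof -
  have top: "coeff (tm f) (Suc (degree f)) = 1"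
    by (simp add: coeff_tmul assms sigma_one coeff_eq_0 delta_zero)
  then have "Suc (degree f) \<le> degree (tm f)" by (intro le_degree) simp
  then show "degree (tm f) = Suc (degree f)" using degree_tmul_le[of f] by simp
  with top show "lead_coeff (tm f) = 1" by simp
qed

subsection \<open>The ring D[t;\<sigma>,\<delta>]\<close>

lemma skew_mult_conv_sum: "degree p < N \<Longrightarrow> p \<odot> q = (\<Sum>i<N. lscal (coeff p i) ((tm ^^ i) q))"
  unfolding skew_mult_def by (rule sum.mono_neutral_left) (auto simp: coeff_eq_0)

lemma skew_mult_pCons: "pCons a p \<odot> q = lscal a q + p \<odot> tm q"
proof -
  let ?N = "Suc (degree p)"
  have "pCons a p \<odot> q = (\<Sum>i<Suc ?N. lscal (coeff (pCons a p) i) ((tm ^^ i) q))"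
    by (rule skew_mult_conv_sum) (simp add: degree_pCons_le le_imp_less_Suc)
  also have "\<dots> = lscal a q + (\<Sum>i<?N. lscal (coeff p i) ((tm ^^ i) (tm q)))"
    by (subst sum.lessThan_Suc_shift) (simp add: funpow_Suc_right del: funpow.simps)
  also have "(\<Sum>i<?N. lscal (coeff p i) ((tm ^^ i) (tm q))) = p \<odot> tm q"
    by (rule skew_mult_conv_sum[symmetric]) simp
  finally show ?thesis .
qed

lemma skew_mult_0_left [simp]: "0 \<odot> q = 0"
  unfolding skew_mult_def by simp

lemma skew_mult_const_left: "[:c:] \<odot> q = lscal c q"
  by (simp add: skew_mult_pCons)

lemma skew_mult_monom_one_left: "monom 1 1 \<odot> q = tm q"
  by (simp add: monom_Suc monom_0 skew_mult_pCons skew_mult_const_left)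

lemma skew_mult_add_right: "p \<odot> (q1 + q2) = p \<odot> q1 + p \<odot> q2"
  by (induction p arbitrary: q1 q2 rule: pCons_induct)
     (simp_all add: skew_mult_pCons tmul_add lscal_add algebra_simps)

lemma skew_mult_diff_right: "p \<odot> (q1 - q2) = p \<odot> q1 - p \<odot> q2"
  using skew_mult_add_right[of p "q1 - q2" q2] by (simp add: algebra_simps)

lemma skew_mult_add_left: "(p1 + p2) \<odot> q = p1 \<odot> q + p2 \<odot> q"
proof -
  let ?N = "Suc (max (degree p1) (degree p2))"
  have "p1 \<odot> q = (\<Sum>i<?N. lscal (coeff p1 i) ((tm ^^ i) q))"
    and "p2 \<odot> q = (\<Sum>i<?N. lscal (coeff p2 i) ((tm ^^ i) q))"
    by (rule skew_mult_conv_sum; simp)+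
  moreover have "(p1 + p2) \<odot> q = (\<Sum>i<?N. lscal (coeff (p1 + p2) i) ((tm ^^ i) q))"
    by (rule skew_mult_conv_sum) (meson degree_add_le le_imp_less_Suc max.cobounded1 max.cobounded2)
  ultimately show ?thesis by (simp add: lscal_add_left sum.distrib)
qed

lemma skew_mult_diff_left: "(p1 - p2) \<odot> q = p1 \<odot> q - p2 \<odot> q"
  using skew_mult_add_left[of "p1 - p2" p2 q] by (simp add: algebra_simps)

lemma skew_mult_lscal_left: "lscal c p \<odot> q = lscal c (p \<odot> q)"
  by (induction p arbitrary: q rule: pCons_induct)
     (simp_all add: skew_mult_pCons lscal_pCons lscal_lscal lscal_add)

lemma skew_mult_tmul_left: "tm p \<odot> r = tm (p \<odot> r)"
proof (induction p arbitrary: r rule: pCons_induct)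
  case 0 then show ?case by (simp add: tmul_0)
next
  case (pCons a p)
  have "tm (pCons a p) \<odot> r = lscal (\<delta> a) r + (lscal (\<sigma> a) (tm r) + tm p \<odot> tm r)"
    by (simp add: tmul_pCons skew_mult_pCons skew_mult_add_left skew_mult_const_left)
  also have "\<dots> = tm (pCons a p \<odot> r)"
    by (simp add: pCons.IH skew_mult_pCons tmul_add tmul_lscal algebra_simps)
  finally show ?case .
qed

lemma skew_mult_assoc: "p \<odot> q \<odot> r = p \<odot> (q \<odot> r)"
  by (induction p arbitrary: q rule: pCons_induct)
     (simp_all add: skew_mult_pCons skew_mult_add_left skew_mult_lscal_left skew_mult_tmul_left)

lemma degree_skew_mult_le: "degree (p \<odot> q) \<le> degree p + degree q"
proof (induction p arbitrary: q rule: pCons_induct)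
  case (pCons a p)
  have "degree (p \<odot> tm q) \<le> degree p + Suc (degree q)"
    using pCons.IH[of "tm q"] degree_tmul_le[of q] by linarith
  then show ?case
    using degree_add_le_max[of "lscal a q" "p \<odot> tm q"] degree_lscal_le[of a q]
    by (cases "p = 0") (auto simp: skew_mult_pCons)
qed simp

lemma skew_mult_monic:
  assumes "q \<noteq> 0" and "lead_coeff f = 1"
  shows "degree (q \<odot> f) = degree q + degree f \<and> lead_coeff (q \<odot> f) = lead_coeff q"
  using assms
proof (induction q arbitrary: f rule: pCons_induct)
  case (pCons a p)
  show ?case
  proof (cases "p = 0")
    case True
    with pCons show ?thesis
      by (simp add: skew_mult_pCons degree_lscal lead_coeff_lscal coeff_lscal)
  next
    case False
    note tf = tmul_monic[OF pCons.prems(2)]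
    have IH: "degree (p \<odot> tm f) = degree p + Suc (degree f)" "lead_coeff (p \<odot> tm f) = lead_coeff p"
      using pCons.IH[OF False tf(2)] tf(1) by auto
    moreover have "degree (lscal a f) < degree (p \<odot> tm f)"
      using degree_lscal_le[of a f] IH(1) by linarith
    ultimately show ?thesis using False
      by (simp add: skew_mult_pCons degree_add_eq_right lead_coeff_add_le coeff_eq_0)
  qed
qed simp

subsection \<open>Right division by a monic polynomial\<close>

lemma degree_diff_less_same_lead:
  assumes "degree a = n" "degree b = n" "lead_coeff a = lead_coeff b" "0 < n"
  shows "degree (a - b) < n"
proof (rule degree_lessI)
  show "a - b \<noteq> 0 \<or> 0 < n" using assms by simp
  show "\<forall>k\<ge>n. coeff (a - b) k = 0"
    using assms by (auto simp: coeff_eq_0 le_less)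
qed

lemma skew_division_exists:
  assumes "lead_coeff f = 1" "0 < degree f"
  shows "\<exists>q r. degree r < degree f \<and> g = q \<odot> f + r"
proof (induction "degree g" arbitrary: g rule: less_induct)
  case less
  show ?case
  proof (cases "degree g < degree f")
    case True
    then show ?thesis by (intro exI[of _ 0] exI[of _ g]) simp
  next
    case False
    let ?q = "monom (lead_coeff g) (degree g - degree f)"
    have "g \<noteq> 0" using False assms by auto
    then have "degree (?q \<odot> f) = degree g" "lead_coeff (?q \<odot> f) = lead_coeff g"
      using skew_mult_monic[of ?q f] assms False by (auto simp: degree_monom_eq)
    then have "degree (g - ?q \<odot> f) < degree g"
      using False assms by (intro degree_diff_less_same_lead) simp_all
    then obtain q r where r: "degree r < degree f" and "g - ?q \<odot> f = q \<odot> f + r"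
      using less by meson
    then have "g = (?q + q) \<odot> f + r"
      by (simp add: skew_mult_add_left algebra_simps)
    with r show ?thesis by blast
  qed
qed

lemma skew_division_unique_remainder:
  assumes "lead_coeff f = 1" "degree r1 < degree f" "degree r2 < degree f"
    and "q1 \<odot> f + r1 = q2 \<odot> f + r2"
  shows "r1 = r2"
proof (rule ccontr)
  assume "r1 \<noteq> r2"
  then have "q1 - q2 \<noteq> 0" using assms(4) by auto
  then have "degree f \<le> degree ((q1 - q2) \<odot> f)" using skew_mult_monic[of "q1 - q2" f] assms by simp
  moreover have "(q1 - q2) \<odot> f = r2 - r1" using assms(4) by (simp add: skew_mult_diff_left algebra_simps)
  moreover have "degree (r2 - r1) < degree f" using assms by (simp add: degree_diff_less)
  ultimately show False by simp
qed

context
  fixes f :: "'a poly"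
  assumes monic: "lead_coeff f = 1" and degree_pos: "0 < degree f"
begin

lemma skew_rmod_eqI:
  assumes "degree r < degree f" and "g = q \<odot> f + r"
  shows "rmod g f = r"
  unfolding skew_rmod_def
proof (rule the_equality)
  fix r' assume "degree r' < degree f \<and> (\<exists>q'. g = q' \<odot> f + r')"
  then show "r' = r"
    using skew_division_unique_remainder[OF monic _ assms(1)] assms(2) by metis
qed (use assms in blast)

lemma skew_rmod: "degree (rmod g f) < degree f" "\<exists>q. g = q \<odot> f + rmod g f"
proof -
  obtain q r where "degree r < degree f" "g = q \<odot> f + r"
    using skew_division_exists[OF monic degree_pos] by blast
  with skew_rmod_eqI[OF this] show "degree (rmod g f) < degree f" "\<exists>q. g = q \<odot> f + rmod g f"
    by auto
qed

lemma skew_rmod_diff: "rmod (a - b) f = rmod a f - rmod b f"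
proof -
  obtain qa qb where "a = qa \<odot> f + rmod a f" "b = qb \<odot> f + rmod b f"
    using skew_rmod(2) by blast
  then have "a - b = (qa - qb) \<odot> f + (rmod a f - rmod b f)"
    by (simp add: skew_mult_diff_left algebra_simps)
  then show ?thesis
    by (intro skew_rmod_eqI) (simp_all add: degree_diff_less skew_rmod(1))
qed

lemma skew_rmod_small: "degree g < degree f \<Longrightarrow> rmod g f = g"
  using skew_rmod_eqI[of g g 0] by simp

lemma skew_rmod_multiple [simp]: "rmod (h \<odot> f) f = 0"
  using skew_rmod_eqI[of 0] degree_pos by simp

lemma skew_rmod_eq_0_iff: "rmod g f = 0 \<longleftrightarrow> (\<exists>h. g = h \<odot> f)"
  using skew_rmod(2)[of g] by auto

lemma skew_rmod_same_degree:
  assumes "degree g = degree f"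
  shows "g = [:lead_coeff g:] \<odot> f + rmod g f"
proof -
  have "lead_coeff g \<noteq> 0" using assms degree_pos by (metis degree_0 leading_coeff_0_iff less_irrefl)
  then have "degree (g - [:lead_coeff g:] \<odot> f) < degree f"
    using assms degree_pos monic
    by (intro degree_diff_less_same_lead)
       (simp_all add: skew_mult_const_left degree_lscal coeff_lscal)
  then show ?thesis
    using skew_rmod_eqI[of _ g "[:lead_coeff g:]"] by simp
qed

subsection \<open>Associators of the Petit algebra S_f\<close>

lemma Sf_mult_small: "degree (x \<odot> y) < degree f \<Longrightarrow> Sf_mult \<sigma> \<delta> f x y = x \<odot> y"
  unfolding Sf_mult_def by (rule skew_rmod_small)

lemma Sf_assoc_via_quotient:
  assumes "x \<odot> y = q \<odot> f + Sf_mult \<sigma> \<delta> f x y"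
  shows "Sf_assoc \<sigma> \<delta> f x y z = - rmod (q \<odot> (f \<odot> z)) f"
proof -
  obtain q' where q': "y \<odot> z = q' \<odot> f + Sf_mult \<sigma> \<delta> f y z"
    using skew_rmod(2) unfolding Sf_mult_def by blast
  have xy: "Sf_mult \<sigma> \<delta> f x y = x \<odot> y - q \<odot> f" and yz: "Sf_mult \<sigma> \<delta> f y z = y \<odot> z - q' \<odot> f"
    using assms q' by (simp_all add: algebra_simps)
  have "Sf_mult \<sigma> \<delta> f (Sf_mult \<sigma> \<delta> f x y) z = rmod (x \<odot> (y \<odot> z)) f - rmod (q \<odot> (f \<odot> z)) f"
    unfolding xy by (simp add: Sf_mult_def skew_mult_diff_left skew_mult_assoc skew_rmod_diff)
  moreover have "Sf_mult \<sigma> \<delta> f x (Sf_mult \<sigma> \<delta> f y z) = rmod (x \<odot> (y \<odot> z)) f"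
    unfolding yz by (simp add: Sf_mult_def skew_mult_diff_right skew_mult_assoc[symmetric] skew_rmod_diff)
  ultimately show ?thesis unfolding Sf_assoc_def by simp
qed

lemma Sf_assoc_top_degree:
  assumes "degree (x \<odot> y) = degree f"
  shows "Sf_assoc \<sigma> \<delta> f x y z = - rmod (lscal (lead_coeff (x \<odot> y)) (f \<odot> z)) f"
  using Sf_assoc_via_quotient[of x y "[:lead_coeff (x \<odot> y):]" z] skew_rmod_same_degree[OF assms]
  unfolding Sf_mult_def by (simp add: skew_mult_const_left)

lemma Sf_right_nucleus_iff:
  assumes "degree f \<ge> 2" and "x \<in> Sf_carrier f"
  shows "x \<in> Sf_right_nucleus \<sigma> \<delta> f \<longleftrightarrow> (\<exists>h. f \<odot> x = h \<odot> f)"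
proof
  assume "x \<in> Sf_right_nucleus \<sigma> \<delta> f"
  moreover have "monom 1 1 \<in> Sf_carrier f" "monom 1 (degree f - 1) \<in> Sf_carrier f"
    using assms(1) by (simp_all add: Sf_carrier_def degree_monom_eq)
  ultimately have "Sf_assoc \<sigma> \<delta> f (monom 1 1) (monom 1 (degree f - 1)) x = 0"
    unfolding Sf_right_nucleus_def by blast
  moreover have "monom 1 1 \<odot> monom 1 (degree f - 1) = monom 1 (degree f)"
    unfolding skew_mult_monom_one_left tmul_monom_one using degree_pos by simp
  ultimately show "\<exists>h. f \<odot> x = h \<odot> f"
    using Sf_assoc_top_degree skew_rmod_eq_0_iff by (simp add: degree_monom_eq)
next
  assume "\<exists>h. f \<odot> x = h \<odot> f"
  then obtain h where h: "f \<odot> x = h \<odot> f" ..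
  have "Sf_assoc \<sigma> \<delta> f y z x = 0" for y z
  proof -
    obtain q where "y \<odot> z = q \<odot> f + Sf_mult \<sigma> \<delta> f y z"
      using skew_rmod(2) unfolding Sf_mult_def by blast
    then show ?thesis
      by (simp add: Sf_assoc_via_quotient h skew_mult_assoc[symmetric])
  qed
  with assms(2) show "x \<in> Sf_right_nucleus \<sigma> \<delta> f"
    unfolding Sf_right_nucleus_def by blast
qed

lemma const_in_Sf_nucleus:
  assumes "[:b:] \<in> Sf_right_nucleus \<sigma> \<delta> f"
  shows "[:b:] \<in> Sf_nucleus \<sigma> \<delta> f"
proof -
  have "Sf_assoc \<sigma> \<delta> f x y z = 0"
    if "degree (x \<odot> y) < degree f" for x y z
    using Sf_assoc_via_quotient[of x y 0 z] Sf_mult_small[OF that]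
    by (simp add: skew_rmod_small degree_pos)
  moreover have "degree ([:b:] \<odot> y) < degree f" "degree (y \<odot> [:b:]) < degree f"
    if "y \<in> Sf_carrier f" for y
    using that degree_skew_mult_le[of "[:b:]" y] degree_skew_mult_le[of y "[:b:]"]
    by (simp_all add: Sf_carrier_def)
  ultimately show ?thesis
    using assms unfolding Sf_nucleus_def Sf_right_nucleus_def by simp
qed

lemma right_invariantI:
  assumes "\<And>z. degree z < degree f \<Longrightarrow> \<exists>h. f \<odot> z = h \<odot> f"
  shows "right_invariant \<sigma> \<delta> f"
  unfolding right_invariant_def
proof
  fix g
  obtain q where q: "g = q \<odot> f + rmod g f" using skew_rmod(2) by blast
  obtain h where "f \<odot> rmod g f = h \<odot> f" using assms skew_rmod(1) by blast
  then have "f \<odot> g = (f \<odot> q + h) \<odot> f"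
    by (subst q) (simp add: skew_mult_add_right skew_mult_add_left skew_mult_assoc)
  then show "\<exists>h. f \<odot> g = h \<odot> f" ..
qed

lemma right_invariant_if_nonconst_in_left_nucleus:
  assumes "x \<in> Sf_carrier f" and "degree x > 0"
    and left_nuclear: "\<forall>y\<in>Sf_carrier f. \<forall>z\<in>Sf_carrier f. Sf_assoc \<sigma> \<delta> f x y z = 0"
  shows "right_invariant \<sigma> \<delta> f"
proof (rule right_invariantI)
  fix z :: "'a poly" assume z: "degree z < degree f"
  let ?y = "monom 1 (degree f - degree x)"
  have x: "x \<noteq> 0" "degree x < degree f"
    using assms(1,2) unfolding Sf_carrier_def by auto
  then have xy: "degree (x \<odot> ?y) = degree f" "lead_coeff (x \<odot> ?y) \<noteq> 0"
    using skew_mult_monic[of x ?y] by (auto simp: degree_monom_eq)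
  have "?y \<in> Sf_carrier f" using assms(2) degree_pos by (simp add: Sf_carrier_def degree_monom_eq)
  with left_nuclear z have "Sf_assoc \<sigma> \<delta> f x ?y z = 0"
    unfolding Sf_carrier_def by blast
  then obtain h where h: "lscal (lead_coeff (x \<odot> ?y)) (f \<odot> z) = h \<odot> f"
    using Sf_assoc_top_degree[OF xy(1)] skew_rmod_eq_0_iff by auto
  have "f \<odot> z = lscal (inverse (lead_coeff (x \<odot> ?y))) h \<odot> f"
    using arg_cong[OF h, of "lscal (inverse (lead_coeff (x \<odot> ?y)))"] xy(2)
    by (simp add: lscal_lscal skew_mult_lscal_left)
  then show "\<exists>h. f \<odot> z = h \<odot> f" ..
qed

end

lemma monic_times_const_eq_iff:
  assumes "lead_coeff f = 1"
  shows "(\<exists>h. f \<odot> [:b:] = h \<odot> f) \<longleftrightarrow> (\<exists>d. f \<odot> [:b:] = [:d:] \<odot> f)"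
proof
  assume "\<exists>h. f \<odot> [:b:] = h \<odot> f"
  then obtain h where h: "f \<odot> [:b:] = h \<odot> f" ..
  have "degree h = 0"
  proof (cases "h = 0")
    case False
    then show ?thesis
      using skew_mult_monic[OF False assms] degree_skew_mult_le[of f "[:b:]"] h by simp
  qed simp
  then show "\<exists>d. f \<odot> [:b:] = [:d:] \<odot> f" using h by (metis degree_0_id)
qed blast

end

theorem mainTheorem3:
  fixes \<sigma> \<delta> :: "'a::division_ring \<Rightarrow> 'a" and f :: "'a poly" and B :: "'a set"
  assumes "ring_endo \<sigma>" and "left_sigma_derivation \<sigma> \<delta>"
    and "lead_coeff f = 1" and "degree f \<ge> 2"
    and "is_subring B"
  shows "(weak_semi_invariant \<sigma> \<delta> B f \<longleftrightarrow> (\<lambda>b. [:b:]) ` B \<subseteq> Sf_right_nucleus \<sigma> \<delta> f)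
    \<and> (weak_semi_invariant \<sigma> \<delta> B f \<and> \<not> right_invariant \<sigma> \<delta> f \<longrightarrow>
         (\<lambda>b. [:b:]) ` B \<subseteq> Sf_nucleus \<sigma> \<delta> f \<and> Sf_nucleus \<sigma> \<delta> f \<subseteq> range (\<lambda>b. [:b:]))"
proof -
  interpret skew_polynomial_ring \<sigma> \<delta> using assms(1,2) by unfold_locales
  have deg: "0 < degree f" using assms(4) by simp
  have "[:b:] \<in> Sf_right_nucleus \<sigma> \<delta> f \<longleftrightarrow> (\<exists>d. f \<odot> [:b:] = [:d:] \<odot> f)" for b
    using Sf_right_nucleus_iff[OF assms(3) deg assms(4)] monic_times_const_eq_iff[OF assms(3)] deg
    by (simp add: Sf_carrier_def)
  then have part_i: "weak_semi_invariant \<sigma> \<delta> B f \<longleftrightarrow> (\<lambda>b. [:b:]) ` B \<subseteq> Sf_right_nucleus \<sigma> \<delta> f"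
    unfolding weak_semi_invariant_def by auto
  have "Sf_nucleus \<sigma> \<delta> f \<subseteq> range (\<lambda>b. [:b:])" if "\<not> right_invariant \<sigma> \<delta> f"
  proof
    fix x assume "x \<in> Sf_nucleus \<sigma> \<delta> f"
    then have "degree x = 0"
      using right_invariant_if_nonconst_in_left_nucleus[OF assms(3) deg, of x] that
      unfolding Sf_nucleus_def by blast
    then show "x \<in> range (\<lambda>b. [:b:])" by (metis degree_0_id rangeI)
  qed
  moreover have "(\<lambda>b. [:b:]) ` B \<subseteq> Sf_nucleus \<sigma> \<delta> f" if "weak_semi_invariant \<sigma> \<delta> B f"
    using that part_i const_in_Sf_nucleus[OF assms(3) deg] by auto
  ultimately show ?thesis using part_i by blast
qed

end
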